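(* Let $A$ be an $m$-dimensional permutation array of even order $n$ defined by a bijection $\varphi:[n_1]\times\cdots\times[n_{m-1}]\to[n_m]$. Let $E=\{i\in[m-1]: n_i\text{ is even}\}$ and $\theta=1-\prod_{i\in E}\frac{n_i-1}{n_i}$ (with $\theta=0$ if $E=\emptyset$). If $\theta<\frac{n-2}{2n}$, then there is an $n_1\times\cdots\times n_m$ window in the periodic extension of $A$ which has a repeated difference vector. In particular, if $A$ is an $m$-dimensional Costas array with $\theta<\frac{n-2}{2n}$, then $A$ is not periodic Costas.
   Context: For $n\in\mathbb{N}$, $[n]=\{1,\dots,n\}$; $m\ge2$, all $n_i\ge2$. A binary array $A:[n_1]\times\cdots\times[n_m]\to\{0,1\}$ is an $m$-dimensional permutation array if there exist $k$ with $1\le k<m$ and a bijection $\varphi:[n_1]\times\cdots\times[n_k]\to[n_{k+1}]\times\cdots\times[n_m]$ with $A(a_1,\dots,a_m)=1$ iff $\varphi(a_1,\dots,a_k)=(a_{k+1},\dots,a_m)$ (here $k=m-1$); points with value 1 are dots; the order is the number of dots, here $n=n_1\cdots n_{m-1}=n_m$. The periodic extension $\mathbb{A}:\mathbb{Z}^m\to\{0,1\}$ is $\mathbb{A}(a_1,\dots,a_m)=A(a_1',\dots,a_m')$ with $a_i'\in[n_i]$, $a_i'\equiv a_i\pmod{n_i}$; an $n_1\times\cdots\times n_m$ window is the restriction of $\mathbb{A}$ to a box $\prod_i\{k_i,\dots,k_i+n_i-1\}$, $k_i\in\mathbb{Z}$. The difference vector from dot $(a_i)$ to a distinct dot $(w_i)$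 is $\langle w_i-a_i\rangle_i$; a window has a repeated difference vector if two distinct ordered pairs of distinct dots in it have equal difference vectors. An $m$-dimensional Costas array is a permutation array with no repeated difference vector; it is periodic Costas if every $n_1\times\cdots\times n_m$ window of its periodic extension has no repeated difference vector. *)

theory Defs
  imports Complex_Main
begin

text \<open>Points of Z^m are int lists of length m; coordinate i (1-based in the paper)
  is list position i-1. The size vector (n_1,...,n_m) is a nat list ns.\<close>

definition box :: "nat list \<Rightarrow> int list set" where
  "box ns = {a. length a = length ns \<and>
     (\<forall>i<length ns. 1 \<le> a!i \<and> a!i \<le> int (ns!i))}"

definition perm_array :: "nat list \<Rightarrow> (int list \<Rightarrow> int) \<Rightarrow> int list \<Rightarrow> bool" where
  "perm_array ns \<phi> a \<longleftrightarrow> a \<in> box ns \<and> \<phi> (butlast a) = last a"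

definition periodic_ext :: "nat list \<Rightarrow> (int list \<Rightarrow> bool) \<Rightarrow> int list \<Rightarrow> bool" where
  "periodic_ext ns A a = A (map2 (\<lambda>x n. (x - 1) mod int n + 1) a ns)"

definition window :: "nat list \<Rightarrow> int list \<Rightarrow> int list set" where
  "window ns k = {a. length a = length ns \<and>
     (\<forall>i<length ns. k!i \<le> a!i \<and> a!i \<le> k!i + int (ns!i) - 1)}"

definition diff_vec :: "int list \<Rightarrow> int list \<Rightarrow> int list" where
  "diff_vec a w = map2 (-) w a"

definition has_repeated_diff :: "int list set \<Rightarrow> bool" where
  "has_repeated_diff D \<longleftrightarrow> (\<exists>a\<in>D. \<exists>w\<in>D. \<exists>b\<in>D. \<exists>v\<in>D.
      a \<noteq> w \<and> b \<noteq> v \<and> (a, w) \<noteq> (b, v) \<and> diff_vec a w = diff_vec b v)"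

definition window_dots :: "nat list \<Rightarrow> (int list \<Rightarrow> bool) \<Rightarrow> int list \<Rightarrow> int list set" where
  "window_dots ns A k = {a \<in> window ns k. periodic_ext ns A a}"

definition is_costas :: "nat list \<Rightarrow> (int list \<Rightarrow> bool) \<Rightarrow> bool" where
  "is_costas ns A \<longleftrightarrow> \<not> has_repeated_diff {a \<in> box ns. A a}"

definition is_periodic_costas :: "nat list \<Rightarrow> (int list \<Rightarrow> bool) \<Rightarrow> bool" where
  "is_periodic_costas ns A \<longleftrightarrow>
     (\<forall>k. length k = length ns \<longrightarrow> \<not> has_repeated_diff (window_dots ns A k))"

definition theta :: "nat list \<Rightarrow> real" where
  "theta ns = 1 - (\<Prod>i\<in>{i. i < length ns - 1 \<and> even (ns!i)}.
                     (real (ns!i) - 1) / real (ns!i))"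

end

theory Submission
  imports Defs
begin

text \<open>Since n = n_1 \<cdots> n_(m-1) is even, some n_j with j < m is even, and n_j = 2 would force
  \<theta> \<ge> 1/2, so n_j \<ge> 4. Let s be the cyclic successor in coordinate j on the box
  [n_1] \<times> \<cdots> \<times> [n_(m-1)]. As \<phi> is a bijection onto [n] and s has no fixed points, the n residues
  (\<phi>(s x) - \<phi>(x)) mod n lie in {1, ..., n-1}, so two of them coincide for some x \<noteq> x'. The dots over
  x, s x and over x', s x' then have the same difference vector modulo (n_1, ..., n_m), and a window in
  which the two differences agree exactly can be chosen one coordinate at a time: in each coordinate one
  cuts the cycle Z/n_i where neither or both of the two differences wrap around. This is possible
  because the two pairs are never swapped, which in coordinate j needs n_j \<ge> 3.\<close>

lemma mod_eq_add_mult: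
  fixes x n q :: int
  assumes "0 \<le> x + q * n" "x + q * n < n"
  shows "x mod n = x + q * n"
proof -
  have "x mod n = (x + q * n) mod n" by simp
  also have "\<dots> = x + q * n" using assms by (rule mod_pos_pos_trivial)
  finally show ?thesis .
qed

lemma eq_if_mod_eq_in_range:
  fixes u v n :: int
  assumes "u mod n = v mod n" "1 \<le> u" "u \<le> n" "1 \<le> v" "v \<le> n"
  shows "u = v"
proof -
  have "(u - 1) mod n = (v - 1) mod n"
    using assms(1) by (rule mod_diff_cong) simp
  then show ?thesis using assms(2-5) by simp
qed

text \<open>The representative of v modulo n in [c, c + n - 1]: in a window with corner c this is the
  point of the periodic extension lying over v.\<close>

definition rep :: "int \<Rightarrow> int \<Rightarrow> int \<Rightarrow> int" where
  "rep c n v = c + (v - c) mod n"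

lemma rep_bounds:
  assumes "0 < n"
  shows "c \<le> rep c n v" "rep c n v \<le> c + n - 1"
  using assms by (simp_all add: rep_def)

lemma rep_mod [simp]: "rep c n v mod n = v mod n"
  by (simp add: rep_def mod_add_right_eq)

lemma rep_cong: "u mod n = v mod n \<Longrightarrow> rep c n u = rep c n v"
  unfolding rep_def by (metis mod_diff_left_eq)

lemma rep_diff:
  fixes n :: int
  assumes "0 < n"
  shows "rep c n b - rep c n a
           = (b - a) mod n - (if (a - c) mod n + (b - a) mod n < n then 0 else n)"
proof -
  define p r where "p = (a - c) mod n" and "r = (b - a) mod n"
  have "(b - c) mod n = ((a - c) + (b - a)) mod n" by simp
  also have "\<dots> = (p + r) mod n" by (simp add: p_def r_def mod_add_eq)
  finally have "(b - c) mod n = (p + r) mod n" .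
  moreover have "0 \<le> p" "p < n" "0 \<le> r" "r < n"
    using assms by (simp_all add: p_def r_def)
  moreover have "(p + r) mod n = p + r + (-1) * n" if "n \<le> p + r"
    using that \<open>p < n\<close> \<open>r < n\<close> by (intro mod_eq_add_mult) auto
  ultimately show ?thesis
    by (simp add: rep_def p_def[symmetric] r_def[symmetric])
qed

text \<open>Think of a, b and a', b' as arcs of the same length r on the cycle Z/n. Cutting the cycle at c
  maps b - a to r or r - n according to whether the cut falls inside the arc from a to b. A cut outside
  both arcs or inside both exists unless the two arcs are complementary, i.e. the pairs are swapped;
  depending on the offset t of a' from a, one of the cuts a, a + 1, a', a' + 1 works.\<close>

lemma ex_rep_diff_eq:
  fixes n a b a' b' :: int
  assumes n: "0 < n"
    and same_diff: "(b - a) mod n = (b' - a') mod n"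
    and no_swap: "\<not> (a' mod n = b mod n \<and> b' mod n = a mod n)"
  shows "\<exists>c. rep c n b - rep c n a = rep c n b' - rep c n a'"
proof -
  define r t where "r = (b - a) mod n" and "t = (a' - a) mod n"
  have r: "0 \<le> r" "r < n" and t: "0 \<le> t" "t < n"
    using n by (simp_all add: r_def t_def)
  have dvd_r: "n dvd (b - a) - r" "n dvd (b' - a') - r" and dvd_t: "n dvd (a' - a) - t"
    using dvd_minus_mod[of n "b - a"] dvd_minus_mod[of n "b' - a'"] dvd_minus_mod[of n "a' - a"]
    by (simp_all add: r_def t_def same_diff)
  have from_a: "(a' - (a + e)) mod n = (t - e) mod n" for e
    using dvd_t by (simp add: mod_eq_dvd_iff algebra_simps)
  have from_a': "(a - (a' + e)) mod n = (- t - e) mod n" for e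
  proof -
    have "n dvd - ((a' - a) - t)" using dvd_t by (simp only: dvd_minus_iff)
    then show ?thesis by (simp add: mod_eq_dvd_iff algebra_simps)
  qed
  have wrap_agree: "rep c n b - rep c n a = rep c n b' - rep c n a'"
    if "(a - c) mod n + r < n \<longleftrightarrow> (a' - c) mod n + r < n" for c
    using rep_diff[OF n, of c b a] rep_diff[OF n, of c b' a'] that same_diff
    by (simp add: r_def)
  consider "t + r < n" | "n < t + r" | "t + r = n" "r < t" | "t + r = n" "t < r" | "t + r = n" "t = r"
    by linarith
  then show ?thesis
  proof cases
    case 1
    then show ?thesis
      using wrap_agree[of a] from_a[of 0] t r by auto
  next
    case 2
    have "(a - (a + 1)) mod n = n - 1" and "(a' - (a + 1)) mod n = t - 1"
      using from_a[of 1] mod_eq_add_mult[of "-1" 1 n] t r 2 by auto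
    then show ?thesis
      using wrap_agree[of "a + 1"] 2 r t by auto
  next
    case 3
    have "(a - a') mod n = n - t"
      using from_a'[of 0] mod_eq_add_mult[of "- t" 1 n] t 3 by auto
    then show ?thesis
      using wrap_agree[of a'] 3 r t by auto
  next
    case 4
    have "(a - (a' + 1)) mod n = n - t - 1" and "(a' - (a' + 1)) mod n = n - 1"
      using from_a'[of 1] mod_eq_add_mult[of "- t - 1" 1 n] mod_eq_add_mult[of "-1" 1 n] t r 4
      by auto
    then show ?thesis
      using wrap_agree[of "a' + 1"] 4 r t by auto
  next
    case 5
    have "n dvd ((a' - a) - t) - ((b - a) - r)"
      using dvd_t dvd_r(1) by (rule dvd_diff)
    moreover have "n dvd ((b' - a') - r) + ((a' - a) - t) + n"
      using dvd_r(2) dvd_t by (intro dvd_add dvd_refl)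
    ultimately have "a' mod n = b mod n" "b' mod n = a mod n"
      using 5 by (simp_all add: mod_eq_dvd_iff algebra_simps)
    with no_swap show ?thesis by blast
  qed
qed

lemma rep_reduce:
  fixes n v :: int
  assumes "1 \<le> v" "v \<le> n"
  shows "(rep c n v - 1) mod n + 1 = v"
proof -
  have "(rep c n v - 1) mod n = (v - 1) mod n"
    by (metis rep_mod mod_diff_left_eq)
  also have "\<dots> = v - 1" using assms by simp
  finally show ?thesis by simp
qed

lemma box_pos: "a \<in> box ns \<Longrightarrow> i < length ns \<Longrightarrow> 0 < ns!i"
  by (fastforce simp: box_def)

definition window_rep :: "nat list \<Rightarrow> int list \<Rightarrow> int list \<Rightarrow> int list" where
  "window_rep ns k a = map (\<lambda>i. rep (k!i) (int (ns!i)) (a!i)) [0..<length ns]"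

lemma length_window_rep [simp]: "length (window_rep ns k a) = length ns"
  by (simp add: window_rep_def)

lemma nth_window_rep [simp]:
  "i < length ns \<Longrightarrow> window_rep ns k a ! i = rep (k!i) (int (ns!i)) (a!i)"
  by (simp add: window_rep_def)

lemma window_rep_in_window:
  assumes "a \<in> box ns" "length k = length ns"
  shows "window_rep ns k a \<in> window ns k"
  using assms rep_bounds box_pos[OF assms(1)] by (simp add: window_def)

lemma reduce_window_rep:
  assumes "a \<in> box ns"
  shows "map2 (\<lambda>x n. (x - 1) mod int n + 1) (window_rep ns k a) ns = a"
  using assms by (intro nth_equalityI) (auto simp: box_def rep_reduce)

lemma periodic_ext_window_rep:
  "a \<in> box ns \<Longrightarrow> periodic_ext ns A (window_rep ns k a) \<longleftrightarrow> A a"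
  by (simp add: periodic_ext_def reduce_window_rep)

lemma window_rep_inj:
  "a \<in> box ns \<Longrightarrow> b \<in> box ns \<Longrightarrow> window_rep ns k a = window_rep ns k b \<Longrightarrow> a = b"
  by (metis reduce_window_rep)

lemma diff_vec_window_rep:
  "diff_vec (window_rep ns k a) (window_rep ns k w)
     = map (\<lambda>i. rep (k!i) (int (ns!i)) (w!i) - rep (k!i) (int (ns!i)) (a!i)) [0..<length ns]"
  by (intro nth_equalityI) (simp_all add: diff_vec_def)

lemma window_dots_repeated_diff:
  assumes k: "length k = length ns"
    and box: "a \<in> box ns" "w \<in> box ns" "b \<in> box ns" "v \<in> box ns"
    and dots: "A a" "A w" "A b" "A v"
    and distinct: "a \<noteq> w" "b \<noteq> v" "(a, w) \<noteq> (b, v)"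
    and diff: "\<forall>i<length ns. rep (k!i) (int (ns!i)) (w!i) - rep (k!i) (int (ns!i)) (a!i)
                             = rep (k!i) (int (ns!i)) (v!i) - rep (k!i) (int (ns!i)) (b!i)"
  shows "has_repeated_diff (window_dots ns A k)"
proof -
  let ?r = "window_rep ns k"
  have "?r x \<in> window_dots ns A k" if "x \<in> box ns" "A x" for x
    using that window_rep_in_window[OF that(1) k] periodic_ext_window_rep[OF that(1)]
    by (simp add: window_dots_def)
  moreover have "?r a \<noteq> ?r w" "?r b \<noteq> ?r v" "(?r a, ?r w) \<noteq> (?r b, ?r v)"
    using distinct box window_rep_inj by blast+
  moreover have "diff_vec (?r a) (?r w) = diff_vec (?r b) (?r v)"
    using diff by (simp add: diff_vec_window_rep)
  ultimately show ?thesis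
    unfolding has_repeated_diff_def using box dots by blast
qed

lemma ex_window_repeated_diff:
  assumes box: "a \<in> box ns" "w \<in> box ns" "b \<in> box ns" "v \<in> box ns"
    and dots: "A a" "A w" "A b" "A v"
    and distinct: "a \<noteq> w" "b \<noteq> v" "(a, w) \<noteq> (b, v)"
    and cuts: "\<forall>i<length ns. \<exists>c. rep c (int (ns!i)) (w!i) - rep c (int (ns!i)) (a!i)
                                = rep c (int (ns!i)) (v!i) - rep c (int (ns!i)) (b!i)"
  shows "\<exists>k. length k = length ns \<and> has_repeated_diff (window_dots ns A k)"
proof -
  define k where "k = map (\<lambda>i. SOME c. rep c (int (ns!i)) (w!i) - rep c (int (ns!i)) (a!i)
                                     = rep c (int (ns!i)) (v!i) - rep c (int (ns!i)) (b!i))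
                       [0..<length ns]"
  have "length k = length ns" by (simp add: k_def)
  moreover have "\<forall>i<length ns. rep (k!i) (int (ns!i)) (w!i) - rep (k!i) (int (ns!i)) (a!i)
                              = rep (k!i) (int (ns!i)) (v!i) - rep (k!i) (int (ns!i)) (b!i)"
    using cuts unfolding k_def by (auto intro: someI_ex)
  ultimately show ?thesis
    using window_dots_repeated_diff[OF _ box dots distinct] by blast
qed

lemma box_snoc: "x @ [y] \<in> box (bs @ [N]) \<longleftrightarrow> x \<in> box bs \<and> 1 \<le> y \<and> y \<le> int N"
  by (auto simp: box_def nth_append less_Suc_eq)

lemma perm_array_graph_dot:
  assumes "bij_betw \<phi> (box bs) {1..int N}" "x \<in> box bs"
  shows "x @ [\<phi> x] \<in> box (bs @ [N])" "perm_array (bs @ [N]) \<phi> (x @ [\<phi> x])"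
  using assms bij_betwE by (fastforce simp: box_snoc perm_array_def)+

definition cyclic_succ :: "nat list \<Rightarrow> nat \<Rightarrow> int list \<Rightarrow> int list" where
  "cyclic_succ bs j x = x[j := x!j mod int (bs!j) + 1]"

lemma length_cyclic_succ [simp]: "length (cyclic_succ bs j x) = length x"
  by (simp add: cyclic_succ_def)

lemma cyclic_succ_nth_mod:
  "j < length x \<Longrightarrow> cyclic_succ bs j x ! j mod int (bs!j) = (x!j + 1) mod int (bs!j)"
  by (simp add: cyclic_succ_def mod_add_left_eq)

lemma cyclic_succ_nth_other [simp]: "i \<noteq> j \<Longrightarrow> cyclic_succ bs j x ! i = x ! i"
  by (simp add: cyclic_succ_def)

lemma cyclic_succ_in_box:
  assumes "x \<in> box bs" "j < length bs"
  shows "cyclic_succ bs j x \<in> box bs"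
proof -
  have pos: "0 < int (bs!j)" using box_pos[OF assms] by simp
  then have "1 \<le> x!j mod int (bs!j) + 1" "x!j mod int (bs!j) + 1 \<le> int (bs!j)"
    using pos_mod_bound[OF pos, of "x!j"] pos_mod_sign[OF pos, of "x!j"] by linarith+
  then show ?thesis
    using assms by (auto simp: box_def cyclic_succ_def nth_list_update)
qed

lemma cyclic_succ_ne:
  assumes "x \<in> box bs" "j < length bs" "2 \<le> bs!j"
  shows "cyclic_succ bs j x \<noteq> x"
proof
  assume "cyclic_succ bs j x = x"
  then have "(x!j + 1) mod int (bs!j) = x!j mod int (bs!j)"
    using assms(1,2) cyclic_succ_nth_mod[of j x bs] by (simp add: box_def)
  then have "int (bs!j) dvd 1" by (simp add: mod_eq_dvd_iff)
  with assms(3) show False by simp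
qed

lemma cyclic_succ_twice_ne:
  assumes "x \<in> box bs" "j < length bs" "3 \<le> bs!j"
  shows "cyclic_succ bs j (cyclic_succ bs j x) \<noteq> x"
proof
  assume "cyclic_succ bs j (cyclic_succ bs j x) = x"
  moreover have "j < length x" using assms(1,2) by (simp add: box_def)
  ultimately have "x!j mod int (bs!j) = (cyclic_succ bs j x ! j + 1) mod int (bs!j)"
    by (metis cyclic_succ_nth_mod length_cyclic_succ)
  also have "\<dots> = (cyclic_succ bs j x ! j mod int (bs!j) + 1) mod int (bs!j)"
    by (simp add: mod_add_left_eq)
  also have "\<dots> = ((x!j + 1) mod int (bs!j) + 1) mod int (bs!j)"
    using \<open>j < length x\<close> by (simp only: cyclic_succ_nth_mod)
  also have "\<dots> = (x!j + 2) mod int (bs!j)"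
    by (metis mod_add_left_eq add.assoc one_add_one)
  finally have "(x!j + 2) mod int (bs!j) = x!j mod int (bs!j)" by simp
  then have "int (bs!j) dvd 2" by (simp add: mod_eq_dvd_iff)
  with assms(3) show False using zdvd_imp_le[of "int (bs!j)" 2] by simp
qed

lemma cyclic_succ_cut:
  assumes "x \<in> box bs" "x' \<in> box bs" "j < length bs" "3 \<le> bs!j" "i < length bs"
  shows "\<exists>c. rep c (int (bs!i)) (cyclic_succ bs j x ! i) - rep c (int (bs!i)) (x!i)
           = rep c (int (bs!i)) (cyclic_succ bs j x' ! i) - rep c (int (bs!i)) (x'!i)"
proof (cases "i = j")
  case True
  define N where "N = int (bs!j)"
  have "j < length x" "j < length x'" using assms by (simp_all add: box_def)
  then have succ: "rep c N (cyclic_succ bs j y ! j) = rep c N (y!j + 1)" if "y \<in> {x, x'}" for c y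
    using that by (auto intro: rep_cong simp: N_def cyclic_succ_nth_mod)
  have no_swap: "\<not> (x'!j mod N = (x!j + 1) mod N \<and> (x'!j + 1) mod N = x!j mod N)"
  proof
    assume "x'!j mod N = (x!j + 1) mod N \<and> (x'!j + 1) mod N = x!j mod N"
    then have "N dvd (x'!j + 1) - x!j" "N dvd x'!j - (x!j + 1)"
      by (simp_all add: mod_eq_dvd_iff)
    then have "N dvd ((x'!j + 1) - x!j) - (x'!j - (x!j + 1))"
      by (rule dvd_diff)
    then have "N dvd 2" by simp
    with assms(4) show False using zdvd_imp_le[of N 2] by (simp add: N_def)
  qed
  have "0 < N" using assms(4) by (simp add: N_def)
  moreover have "((x!j + 1) - x!j) mod N = ((x'!j + 1) - x'!j) mod N" by simp
  ultimately obtain c where "rep c N (x!j + 1) - rep c N (x!j) = rep c N (x'!j + 1) - rep c N (x'!j)"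
    using ex_rep_diff_eq no_swap by blast
  then show ?thesis
    using succ True by (auto simp: N_def)
qed simp

lemma fixpoint_free_diff_collision:
  fixes \<phi> :: "'a \<Rightarrow> int" and g :: "'a \<Rightarrow> 'a"
  assumes bij: "bij_betw \<phi> B {1..int n}" and "B \<noteq> {}" and g: "\<forall>x\<in>B. g x \<in> B \<and> g x \<noteq> x"
  shows "\<exists>x\<in>B. \<exists>x'\<in>B. x \<noteq> x' \<and> (\<phi> (g x) - \<phi> x) mod int n = (\<phi> (g x') - \<phi> x') mod int n"
proof (rule ccontr)
  define D where "D x = (\<phi> (g x) - \<phi> x) mod int n" for x
  assume "\<not> ?thesis"
  then have "inj_on D B" by (auto simp: inj_on_def D_def)
  have card: "card B = n" and "finite B"
    using bij_betw_same_card[OF bij] bij_betw_finite[OF bij] by simp_all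
  then have n: "0 < int n" using \<open>B \<noteq> {}\<close> by (metis card_gt_0_iff of_nat_0_less_iff)
  have range: "\<phi> x \<in> {1..int n}" if "x \<in> B" for x
    using bij that by (auto dest: bij_betwE)
  have image: "D ` B \<subseteq> {1..int n - 1}"
  proof
    fix d assume "d \<in> D ` B"
    then obtain x where x: "x \<in> B" and d: "d = D x" by blast
    have "D x \<noteq> 0"
    proof
      assume "D x = 0"
      then have "\<phi> (g x) = \<phi> x"
        using eq_if_mod_eq_in_range[of "\<phi> (g x)" "int n" "\<phi> x"] range[of x] range[of "g x"] x g
        by (simp add: D_def mod_eq_dvd_iff dvd_eq_mod_eq_0)
      then show False
        using bij x g unfolding bij_betw_def inj_on_def by blast
    qed
    moreover have "0 \<le> D x" "D x < int n"
      using n by (simp_all add: D_def)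
    ultimately show "d \<in> {1..int n - 1}"
      using d by simp
  qed
  have "card B \<le> card {1..int n - 1}"
    using card_inj_on_le[OF \<open>inj_on D B\<close> image] by simp
  with card n show False by simp
qed

lemma graph_cyclic_succ_cut:
  assumes bij: "bij_betw \<phi> (box bs) {1..int N}"
    and j: "j < length bs" "3 \<le> bs!j"
    and x: "x \<in> box bs" "x' \<in> box bs"
    and same_diff: "(\<phi> (cyclic_succ bs j x) - \<phi> x) mod int N
                      = (\<phi> (cyclic_succ bs j x') - \<phi> x') mod int N"
    and i: "i < length (bs @ [N])"
  shows "\<exists>c. rep c (int ((bs @ [N])!i)) ((cyclic_succ bs j x @ [\<phi> (cyclic_succ bs j x)]) ! i)
                - rep c (int ((bs @ [N])!i)) ((x @ [\<phi> x]) ! i)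
           = rep c (int ((bs @ [N])!i)) ((cyclic_succ bs j x' @ [\<phi> (cyclic_succ bs j x')]) ! i)
                - rep c (int ((bs @ [N])!i)) ((x' @ [\<phi> x']) ! i)"
proof -
  let ?s = "cyclic_succ bs j"
  have sx: "?s x \<in> box bs" "?s x' \<in> box bs"
    using x j by (simp_all add: cyclic_succ_in_box)
  have len: "length x = length bs" "length x' = length bs"
    using x by (simp_all add: box_def)
  have range: "\<phi> y \<in> {1..int N}" if "y \<in> box bs" for y
    using bij that by (auto dest: bij_betwE)
  have inj: "\<phi> y = \<phi> z \<Longrightarrow> y \<in> box bs \<Longrightarrow> z \<in> box bs \<Longrightarrow> y = z" for y z
    using bij by (auto simp: bij_betw_def inj_on_def)
  have N: "0 < int N" using range[OF x(1)] by simp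
  have no_swap: "\<not> (\<phi> x' mod int N = \<phi> (?s x) mod int N \<and> \<phi> (?s x') mod int N = \<phi> x mod int N)"
  proof
    assume "\<phi> x' mod int N = \<phi> (?s x) mod int N \<and> \<phi> (?s x') mod int N = \<phi> x mod int N"
    then have "\<phi> x' = \<phi> (?s x)" "\<phi> (?s x') = \<phi> x"
      using eq_if_mod_eq_in_range range x sx by (meson atLeastAtMost_iff)+
    then have "x' = ?s x" "?s x' = x"
      using inj x sx by blast+
    then show False
      using cyclic_succ_twice_ne[OF x(1) j] by simp
  qed
  from i consider "i < length bs" | "i = length bs" by fastforce
  then show ?thesis
  proof cases
    case 1
    then show ?thesis
      using cyclic_succ_cut[OF x j 1] len by (simp add: nth_append)
  next
    case 2
    then show ?thesis
      using ex_rep_diff_eq[OF N same_diff no_swap] len by (simp add: nth_append)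
  qed
qed

lemma perm_array_window_repeated_diff:
  assumes bij: "bij_betw \<phi> (box bs) {1..int N}"
    and j: "j < length bs" "3 \<le> bs!j"
    and x: "x \<in> box bs" "x' \<in> box bs" "x \<noteq> x'"
    and same_diff: "(\<phi> (cyclic_succ bs j x) - \<phi> x) mod int N
                      = (\<phi> (cyclic_succ bs j x') - \<phi> x') mod int N"
  shows "\<exists>k. length k = length (bs @ [N])
               \<and> has_repeated_diff (window_dots (bs @ [N]) (perm_array (bs @ [N]) \<phi>) k)"
proof -
  let ?s = "cyclic_succ bs j"
  have "2 \<le> bs!j" using j by simp
  then have ne: "x @ [\<phi> x] \<noteq> ?s x @ [\<phi> (?s x)]" "x' @ [\<phi> x'] \<noteq> ?s x' @ [\<phi> (?s x')]"
    using cyclic_succ_ne[OF x(1) j(1)] cyclic_succ_ne[OF x(2) j(1)] by auto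
  have pairs_ne: "(x @ [\<phi> x], ?s x @ [\<phi> (?s x)]) \<noteq> (x' @ [\<phi> x'], ?s x' @ [\<phi> (?s x')])"
    using x(3) by simp
  have sx: "?s x \<in> box bs" "?s x' \<in> box bs"
    using x j by (simp_all add: cyclic_succ_in_box)
  note dot = perm_array_graph_dot[OF bij]
  show ?thesis
    by (rule ex_window_repeated_diff[OF dot(1)[OF x(1)] dot(1)[OF sx(1)] dot(1)[OF x(2)]
          dot(1)[OF sx(2)] dot(2)[OF x(1)] dot(2)[OF sx(1)] dot(2)[OF x(2)] dot(2)[OF sx(2)]
          ne pairs_ne])
      (use graph_cyclic_succ_cut[OF bij j x(1,2) same_diff] in blast)
qed

lemma even_prod_list_iff:
  "even (prod_list xs) \<longleftrightarrow> (\<exists>x\<in>set xs. even (x :: 'a :: semiring_parity))"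
  by (induction xs) auto

lemma theta_ge_half:
  assumes "j < length ns - 1" "ns!j = 2" "\<forall>i<length ns - 1. 1 \<le> ns!i"
  shows "1/2 \<le> theta ns"
proof -
  define E where "E = {i. i < length ns - 1 \<and> even (ns!i)}"
  define g where "g i = (real (ns!i) - 1) / real (ns!i)" for i
  have "j \<in> E" "finite E" using assms(1,2) by (simp_all add: E_def)
  have g: "0 \<le> g i" "g i \<le> 1" if "i \<in> E" for i
    using that assms(3) by (auto simp: E_def g_def divide_simps)
  have "prod g E = g j * prod g (E - {j})"
    using \<open>j \<in> E\<close> \<open>finite E\<close> by (simp add: prod.remove)
  also have "\<dots> \<le> g j"
    using g \<open>j \<in> E\<close> by (intro mult_left_le prod_le_1) auto
  also have "g j = 1/2" using assms(2) by (simp add: g_def)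
  finally show ?thesis
    unfolding theta_def E_def[symmetric] g_def[symmetric] by simp
qed

lemma even_coordinate_ge_3:
  assumes ge2: "\<forall>i<length ns - 1. 2 \<le> ns!i" and even: "even (prod_list (butlast ns))"
    and theta: "theta ns < 1/2"
  shows "\<exists>j<length ns - 1. 3 \<le> ns!j"
proof -
  obtain j where j: "j < length ns - 1" "even (ns!j)"
    using even even_prod_list_iff by (metis in_set_conv_nth length_butlast nth_butlast)
  have "ns!j \<noteq> 2"
  proof
    assume "ns!j = 2"
    then have "1/2 \<le> theta ns"
      using j(1) ge2 by (intro theta_ge_half) auto
    with theta show False by simp
  qed
  with j ge2 show ?thesis by fastforce
qed

theorem mainTheorem10:
  fixes ns :: "nat list" and m n :: nat and \<phi> :: "int list \<Rightarrow> int"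
  assumes "length ns = m" and "m \<ge> 2"
    and "\<forall>i<m. ns!i \<ge> 2"
    and "n = prod_list (butlast ns)" and "n = last ns"
    and "even n"
    and "bij_betw \<phi> (box (butlast ns)) {1..int n}"
    and "theta ns < (real n - 2) / (2 * real n)"
  shows "(\<exists>k. length k = m \<and> has_repeated_diff (window_dots ns (perm_array ns \<phi>) k))
     \<and> (is_costas ns (perm_array ns \<phi>) \<longrightarrow> \<not> is_periodic_costas ns (perm_array ns \<phi>))"
proof -
  define bs where "bs = butlast ns"
  have "ns \<noteq> []" using assms(1,2) by auto
  then have ns: "ns = bs @ [n]" using assms(5) by (simp add: bs_def)
  have "m - 1 < m" using assms(2) by simp
  with assms(3) have "2 \<le> ns!(m - 1)" by blast
  with \<open>ns \<noteq> []\<close> have "2 \<le> n" using assms(1,5) by (simp add: last_conv_nth)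
  have "(real n - 2) / (2 * real n) < 1/2"
    using \<open>2 \<le> n\<close> by (simp add: divide_simps)
  with assms(8) have "theta ns < 1/2" by linarith
  moreover have "\<forall>i<length ns - 1. 2 \<le> ns!i" using assms(1,3) by simp
  ultimately obtain j where "j < length ns - 1" "3 \<le> ns!j"
    using even_coordinate_ge_3 assms(4,6) by blast
  then have j: "j < length bs" "3 \<le> bs!j" by (simp_all add: bs_def nth_butlast)
  have bij: "bij_betw \<phi> (box bs) {1..int n}" using assms(7) by (simp add: bs_def)
  then have "box bs \<noteq> {}" using \<open>2 \<le> n\<close> bij_betw_empty1 by force
  moreover have "\<forall>x\<in>box bs. cyclic_succ bs j x \<in> box bs \<and> cyclic_succ bs j x \<noteq> x"
    using j by (simp add: cyclic_succ_in_box cyclic_succ_ne)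
  ultimately obtain x x' where "x \<in> box bs" "x' \<in> box bs" "x \<noteq> x'"
    "(\<phi> (cyclic_succ bs j x) - \<phi> x) mod int n = (\<phi> (cyclic_succ bs j x') - \<phi> x') mod int n"
    using fixpoint_free_diff_collision[OF bij] by blast
  then have "\<exists>k. length k = m \<and> has_repeated_diff (window_dots ns (perm_array ns \<phi>) k)"
    using perm_array_window_repeated_diff[OF bij j] ns assms(1) by metis
  then show ?thesis
    using assms(1) unfolding is_periodic_costas_def by auto
qed

end
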